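(* Let $p\ge q\ge1$. Let $Q_1:\mathbb{R}\to\mathbb{R}^{d_1}$ and $Q_2:\mathbb{R}^2\to\mathbb{R}^{d_2}$ be measurable. For measurable $U\subset\mathbb{R}^2$ and $I\subset\mathbb{R}$ define $E^{(2)}_Uh(x_1,x_2,x_3,x_4)=\int_U h(r,s)e(x_1r+x_2s+x_3\cdot Q_1(r)+x_4\cdot Q_2(r,s))\,dr\,ds$ for $(x_1,x_2,x_3,x_4)\in\mathbb{R}\times\mathbb{R}\times\mathbb{R}^{d_1}\times\mathbb{R}^{d_2}$, and $E^{(3)}_Ih(x_1,x_3)=\int_I h(r)e(x_1r+x_3\cdot Q_1(r))\,dr$, where $e(z)=e^{2\pi iz}$. Fix a measurable partition $I_1,\dots,I_l$ of $[0,1]$ and a measurable set $B\subset\mathbb{R}^{1+d_1}$. Suppose $C$ is a number such that $\|E^{(3)}_{[0,1]}h\|_{L^p(B)}\le C\big(\sum_i\|E^{(3)}_{I_i}h\|_{L^p(B)}^q\big)^{1/q}$ for all measurable $h:[0,1]\to\mathbb{C}$. Then for every measurable $B'\subset\mathbb{R}^{1+d_2}$ and every measurable $h:[0,1]^2\to\mathbb{C}$, $\|E^{(2)}_{[0,1]^2}h\|_{L^p(B\times B')}\le C\big(\sum_i\|E^{(2)}_{I_i\times[0,1]}h\|_{L^p(B\times B')}^q\big)^{1/q}$, where $B\times B'$ denotes $\{(x_1,x_2,x_3,x_4):(x_1,x_3)\in B,\ (x_2,x_4)\in B'\}\subset\mathbb{R}^{2+d_1+d_2}$. *)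

theory Defs
  imports "HOL-Analysis.Analysis"
begin

definition ee :: "real \<Rightarrow> complex" where
  "ee z = exp (2 * pi * \<i> * complex_of_real z)"

text \<open>Real powers of extended nonnegative reals (infinity stays infinity), for a > 0.\<close>
definition epowr :: "ennreal \<Rightarrow> real \<Rightarrow> ennreal" where
  "epowr x a = (if x = \<infinity> then \<infinity> else ennreal (enn2real x powr a))"

definition Lpnorm :: "real \<Rightarrow> 'a::euclidean_space set \<Rightarrow> ('a \<Rightarrow> complex) \<Rightarrow> ennreal" where
  "Lpnorm p B F = epowr (\<integral>\<^sup>+ x. indicator B x * ennreal (cmod (F x) powr p) \<partial>lborel) (1 / p)"

definition E3 :: "(real \<Rightarrow> real ^ 'd1) \<Rightarrow> real set \<Rightarrow> (real \<Rightarrow> complex)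
    \<Rightarrow> (real \<times> (real ^ 'd1)) \<Rightarrow> complex" where
  "E3 Q1 I h = (\<lambda>(x1, x3). set_lebesgue_integral lborel I
      (\<lambda>r. h r * ee (x1 * r + x3 \<bullet> Q1 r)))"

definition E2 :: "(real \<Rightarrow> real ^ 'd1) \<Rightarrow> (real \<times> real \<Rightarrow> real ^ 'd2) \<Rightarrow> (real \<times> real) set
    \<Rightarrow> (real \<times> real \<Rightarrow> complex) \<Rightarrow> real \<times> real \<times> (real ^ 'd1) \<times> (real ^ 'd2) \<Rightarrow> complex" where
  "E2 Q1 Q2 U h = (\<lambda>(x1, x2, x3, x4). set_lebesgue_integral lborel U
      (\<lambda>(r, s). h (r, s) * ee (x1 * r + x2 * s + x3 \<bullet> Q1 r + x4 \<bullet> Q2 (r, s))))"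

definition boxprod :: "(real \<times> (real ^ 'd1)) set \<Rightarrow> (real \<times> (real ^ 'd2)) set
    \<Rightarrow> (real \<times> real \<times> (real ^ 'd1) \<times> (real ^ 'd2)) set" where
  "boxprod B B' = {(x1, x2, x3, x4). (x1, x3) \<in> B \<and> (x2, x4) \<in> B'}"

end

theory Submission
  imports Defs
begin

text \<open>Fix \<open>(x2, x4)\<close>. By Fubini, \<open>E2_{J \<times> [0,1]} h (x1, x2, x3, x4) = E3_J g (x1, x3)\<close> for
  \<open>g r = \<integral>\<^sub>0\<^sup>1 h (r, s) e(x2 s + x4 \<bullet> Q2 (r, s)) ds\<close>, which is \<open>E2_inner Q2 h (x2, x4)\<close>
  below. So the hypothesis applied to \<open>g\<close> bounds the \<open>L\<^sup>p(B)\<close> norm in \<open>(x1, x3)\<close> pointwise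
  in \<open>(x2, x4)\<close>. By Tonelli, the \<open>L\<^sup>p(B')\<close> norm in \<open>(x2, x4)\<close> of these pointwise norms is
  the \<open>L\<^sup>p(B \<times> B')\<close> norm, and Minkowski's inequality in \<open>L\<^sup>p\<^sup>/\<^sup>q\<close> (this is where
  \<open>p \<ge> q\<close> enters) moves it inside the \<open>\<ell>\<^sup>q\<close> sum over the \<open>I i\<close>. If \<open>h\<close> is not
  integrable on the square, the left-hand side is a Bochner integral of a non-integrable
  function, hence zero.\<close>

lemma epowr_ennreal [simp]: "0 \<le> x \<Longrightarrow> epowr (ennreal x) a = ennreal (x powr a)"
  by (simp add: epowr_def)

lemma epowr_top [simp]: "epowr top a = top"
  by (simp add: epowr_def)

lemma epowr_0 [simp]: "epowr 0 a = 0"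
  by (simp add: epowr_def)

lemma epowr_1 [simp]: "epowr x 1 = x"
  by (cases x) auto

lemma epowr_epowr: "epowr (epowr x a) b = epowr x (a * b)"
  by (cases x) (auto simp: powr_powr)

lemma epowr_eq_0_iff: "epowr x a = 0 \<longleftrightarrow> x = 0"
  by (cases x) auto

lemma epowr_mono: "0 < a \<Longrightarrow> x \<le> y \<Longrightarrow> epowr x a \<le> epowr y a"
  by (cases x; cases y) (auto simp: powr_mono2 top_unique)

lemma epowr_mult:
  assumes "0 < a" shows "epowr (x * y) a = epowr x a * epowr y a"
proof -
  have "epowr (ennreal s * top) a = epowr (ennreal s) a * top" if "0 \<le> s" for s
    using that assms by (cases "s = 0") (auto simp: ennreal_mult_top)
  then show ?thesis using assms
    by (cases x; cases y)
      (auto simp: powr_mult ennreal_top_mult mult.commute simp flip: ennreal_mult)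
qed

lemma borel_measurable_epowr [measurable]:
  assumes [measurable]: "f \<in> borel_measurable M"
  shows "(\<lambda>x. epowr (f x) a) \<in> borel_measurable M"
  unfolding epowr_def by measurable

lemma convex_powr_nonneg:
  fixes x y t r :: real
  assumes "0 \<le> x" "0 \<le> y" "0 \<le> t" "t \<le> 1" "1 \<le> r"
  shows "(t * x + (1 - t) * y) powr r \<le> t * x powr r + (1 - t) * y powr r"
proof -
  have shrink: "(s * z) powr r \<le> s * z powr r" if "0 \<le> s" "s \<le> 1" "0 \<le> z" for s z :: real
    using powr_mono'[of 1 r s] that assms(5) by (simp add: powr_mult mult_right_mono)
  consider "x = 0" | "y = 0" | "0 < x" "0 < y"
    using assms(1,2) by linarith
  then show ?thesis
  proof cases
    case 1
    then show ?thesis using shrink[of "1 - t" y] assms by simp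
  next
    case 2
    then show ?thesis using shrink[of t x] assms by simp
  next
    case 3
    then show ?thesis
      using convex_onD[OF powr_convex[OF assms(5)], of "1 - t" x y] assms by (simp add: add.commute)
  qed
qed

lemma powr_add_le_weighted:
  fixes u v a b r :: real
  assumes "0 \<le> u" "0 \<le> v" "0 < a" "0 < b" "1 \<le> r"
  shows "(u + v) powr r
    \<le> (a + b) powr (r - 1) * (a powr (1 - r) * u powr r + b powr (1 - r) * v powr r)"
proof -
  define t where "t = a / (a + b)"
  have t: "0 \<le> t" "t \<le> 1" "1 - t = b / (a + b)"
    using assms by (auto simp: t_def field_simps)
  have "t * (u / a) = u / (a + b)" "(1 - t) * (v / b) = v / (a + b)"
    using assms by (simp_all add: t(3)) (simp add: t_def)
  then have "u + v = (a + b) * (t * (u / a) + (1 - t) * (v / b))"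
    using assms by (simp add: add_divide_distrib[symmetric])
  then have "(u + v) powr r = (a + b) powr r * (t * (u / a) + (1 - t) * (v / b)) powr r"
    using assms t by (simp add: powr_mult)
  also have "\<dots> \<le> (a + b) powr r * (t * (u / a) powr r + (1 - t) * (v / b) powr r)"
    using convex_powr_nonneg[of "u / a" "v / b" t r] assms t by (simp add: mult_left_mono)
  also have "\<dots> = (a + b) powr (r - 1) * (a powr (1 - r) * u powr r + b powr (1 - r) * v powr r)"
  proof -
    have "(a + b) powr r * (c / (a + b)) * (w / c) powr r
        = (a + b) powr (r - 1) * (c powr (1 - r) * w powr r)"
      if "0 < c" "0 \<le> w" for c w
      using that assms by (simp add: powr_diff powr_divide)
    then show ?thesis
      using assms unfolding t(3) by (simp add: t_def distrib_left mult.assoc)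
  qed
  finally show ?thesis .
qed

lemma epowr_add_le_weighted:
  fixes a b r :: real and x y :: ennreal
  assumes "0 < a" "0 < b" "1 \<le> r"
  shows "epowr (x + y) r \<le> ennreal ((a + b) powr (r - 1)) *
     (ennreal (a powr (1 - r)) * epowr x r + ennreal (b powr (1 - r)) * epowr y r)"
proof (cases "x = top \<or> y = top")
  case True
  then show ?thesis using assms by (auto simp: ennreal_mult_top)
next
  case False
  then obtain u v where uv: "x = ennreal u" "0 \<le> u" "y = ennreal v" "0 \<le> v"
    by (metis ennreal_cases)
  have "epowr (x + y) r = ennreal ((u + v) powr r)"
    using uv by (simp flip: ennreal_plus)
  also have "\<dots> \<le> ennreal ((a + b) powr (r - 1) *
      (a powr (1 - r) * u powr r + b powr (1 - r) * v powr r))"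
    using uv assms by (intro ennreal_leI powr_add_le_weighted) auto
  also have "\<dots> = ennreal ((a + b) powr (r - 1)) *
      (ennreal (a powr (1 - r)) * epowr x r + ennreal (b powr (1 - r)) * epowr y r)"
    using uv by (simp add: ennreal_mult ennreal_plus)
  finally show ?thesis .
qed

definition nn_Lp_norm :: "real \<Rightarrow> 'a measure \<Rightarrow> ('a \<Rightarrow> ennreal) \<Rightarrow> ennreal" where
  "nn_Lp_norm r M f = epowr (\<integral>\<^sup>+x. epowr (f x) r \<partial>M) (1 / r)"

lemma nn_Lp_norm_add_le:
  assumes r: "1 \<le> r" and [measurable]: "f \<in> borel_measurable M" "g \<in> borel_measurable M"
  shows "nn_Lp_norm r M (\<lambda>x. f x + g x) \<le> nn_Lp_norm r M f + nn_Lp_norm r M g"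
proof -
  have null: "(\<integral>\<^sup>+x. epowr (f' x + g' x) r \<partial>M) = (\<integral>\<^sup>+x. epowr (g' x) r \<partial>M)"
    if [measurable]: "f' \<in> borel_measurable M" and "(\<integral>\<^sup>+x. epowr (f' x) r \<partial>M) = 0" for f' g'
  proof -
    have "AE x in M. f' x = 0"
      using that(2) by (subst (asm) nn_integral_0_iff_AE) (auto simp: epowr_eq_0_iff)
    then show ?thesis by (intro nn_integral_cong_AE) auto
  qed
  define a where "a = (\<integral>\<^sup>+x. epowr (f x) r \<partial>M)"
  define b where "b = (\<integral>\<^sup>+x. epowr (g x) r \<partial>M)"
  consider "a = top \<or> b = top" | "a = 0" | "b = 0" | "0 < a" "a < top" "0 < b" "b < top"
    by (metis less_top zero_less_iff_neq_zero)
  then show ?thesis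
  proof cases
    case 1
    then show ?thesis using r by (auto simp: nn_Lp_norm_def a_def[symmetric] b_def[symmetric])
  next
    case 2
    then show ?thesis by (simp add: nn_Lp_norm_def null a_def)
  next
    case 3
    then show ?thesis by (simp add: nn_Lp_norm_def null add.commute[of "f _"] b_def)
  next
    case 4
    define A where "A = enn2real a powr (1 / r)"
    define B where "B = enn2real b powr (1 / r)"
    have AB: "0 < A" "0 < B" "a = ennreal (A powr r)" "b = ennreal (B powr r)"
      using 4 r by (auto simp: A_def B_def powr_powr enn2real_eq_0_iff)
    \<comment> \<open>Weighting the pointwise convexity bound by the two norms makes both integrals collapse.\<close>
    have "(\<integral>\<^sup>+x. epowr (f x + g x) r \<partial>M) \<le> (\<integral>\<^sup>+x. ennreal ((A + B) powr (r - 1)) *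
        (ennreal (A powr (1 - r)) * epowr (f x) r + ennreal (B powr (1 - r)) * epowr (g x) r) \<partial>M)"
      using AB r by (intro nn_integral_mono epowr_add_le_weighted)
    also have "\<dots> = ennreal ((A + B) powr (r - 1)) *
        (ennreal (A powr (1 - r)) * a + ennreal (B powr (1 - r)) * b)"
      by (simp add: a_def b_def nn_integral_cmult nn_integral_add)
    also have "\<dots> = ennreal ((A + B) powr r)"
      using AB by (simp add: powr_diff powr_add[symmetric] ennreal_mult[symmetric]
          ennreal_plus[symmetric] del: ennreal_plus)
    finally have "nn_Lp_norm r M (\<lambda>x. f x + g x) \<le> epowr (ennreal ((A + B) powr r)) (1 / r)"
      using r unfolding nn_Lp_norm_def by (intro epowr_mono) auto
    also have "\<dots> = nn_Lp_norm r M f + nn_Lp_norm r M g"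
      using AB r by (simp add: nn_Lp_norm_def a_def[symmetric] b_def[symmetric] powr_powr)
    finally show ?thesis .
  qed
qed

lemma nn_Lp_norm_sum_le:
  assumes "1 \<le> r" "\<And>i. i \<in> S \<Longrightarrow> f i \<in> borel_measurable M"
  shows "nn_Lp_norm r M (\<lambda>x. \<Sum>i\<in>S. f i x) \<le> (\<Sum>i\<in>S. nn_Lp_norm r M (f i))"
  using assms(2)
proof (induction S rule: infinite_finite_induct)
  case (insert j S)
  have "nn_Lp_norm r M (\<lambda>x. \<Sum>i\<in>insert j S. f i x) = nn_Lp_norm r M (\<lambda>x. f j x + (\<Sum>i\<in>S. f i x))"
    using insert.hyps by simp
  also have "\<dots> \<le> nn_Lp_norm r M (f j) + nn_Lp_norm r M (\<lambda>x. \<Sum>i\<in>S. f i x)"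
    using insert.prems by (intro nn_Lp_norm_add_le assms(1) borel_measurable_sum) auto
  also have "\<dots> \<le> (\<Sum>i\<in>insert j S. nn_Lp_norm r M (f i))"
    using insert by (simp add: add_left_mono)
  finally show ?case .
qed (auto simp: nn_Lp_norm_def)

lemma nn_Lp_norm_mono:
  assumes "0 < r" "\<And>x. x \<in> space M \<Longrightarrow> f x \<le> g x"
  shows "nn_Lp_norm r M f \<le> nn_Lp_norm r M g"
  unfolding nn_Lp_norm_def using assms by (intro epowr_mono nn_integral_mono) auto

lemma nn_Lp_norm_cmult:
  assumes "0 < r" "f \<in> borel_measurable M"
  shows "nn_Lp_norm r M (\<lambda>x. c * f x) = c * nn_Lp_norm r M f"
  using assms by (simp add: nn_Lp_norm_def epowr_mult nn_integral_cmult epowr_epowr)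

lemma nn_Lp_norm_epowr:
  assumes "a \<noteq> 0"
  shows "nn_Lp_norm r M (\<lambda>x. epowr (f x) a) = epowr (nn_Lp_norm (a * r) M f) a"
  using assms by (simp add: nn_Lp_norm_def epowr_epowr)

text \<open>Minkowski's inequality in \<open>L\<^sup>p\<^sup>/\<^sup>q\<close>, applied to the \<open>q\<close>-th powers.\<close>
lemma nn_Lp_norm_lq_sum_le:
  assumes "1 \<le> q" "q \<le> p" "\<And>i. i \<in> S \<Longrightarrow> F i \<in> borel_measurable M"
  shows "nn_Lp_norm p M (\<lambda>y. epowr (\<Sum>i\<in>S. epowr (F i y) q) (1 / q))
    \<le> epowr (\<Sum>i\<in>S. epowr (nn_Lp_norm p M (F i)) q) (1 / q)"
proof -
  have q: "0 < q" "q \<noteq> 0" and pq: "1 \<le> p / q" "q * (p / q) = p" "1 / q * p = p / q"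
    using assms(1,2) by auto
  have "nn_Lp_norm p M (\<lambda>y. epowr (\<Sum>i\<in>S. epowr (F i y) q) (1 / q))
      = epowr (nn_Lp_norm (p / q) M (\<lambda>y. \<Sum>i\<in>S. epowr (F i y) q)) (1 / q)"
    using q by (simp add: nn_Lp_norm_epowr pq)
  also have "\<dots> \<le> epowr (\<Sum>i\<in>S. nn_Lp_norm (p / q) M (\<lambda>y. epowr (F i y) q)) (1 / q)"
    using q pq assms(3) by (intro epowr_mono nn_Lp_norm_sum_le) auto
  also have "\<dots> = epowr (\<Sum>i\<in>S. epowr (nn_Lp_norm p M (F i)) q) (1 / q)"
    using q by (simp add: nn_Lp_norm_epowr pq)
  finally show ?thesis .
qed

lemma nn_Lp_norm_le_lq_sum:
  assumes "1 \<le> q" "q \<le> p" "\<And>i. i \<in> S \<Longrightarrow> F i \<in> borel_measurable M"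
    and "\<And>y. y \<in> space M \<Longrightarrow> G y \<le> c * epowr (\<Sum>i\<in>S. epowr (F i y) q) (1 / q)"
  shows "nn_Lp_norm p M G \<le> c * epowr (\<Sum>i\<in>S. epowr (nn_Lp_norm p M (F i)) q) (1 / q)"
proof -
  have "nn_Lp_norm p M G \<le> nn_Lp_norm p M (\<lambda>y. c * epowr (\<Sum>i\<in>S. epowr (F i y) q) (1 / q))"
    using assms by (intro nn_Lp_norm_mono) auto
  also have "\<dots> = c * nn_Lp_norm p M (\<lambda>y. epowr (\<Sum>i\<in>S. epowr (F i y) q) (1 / q))"
    using assms by (intro nn_Lp_norm_cmult) auto
  also have "\<dots> \<le> c * epowr (\<Sum>i\<in>S. epowr (nn_Lp_norm p M (F i)) q) (1 / q)"
    using assms by (intro mult_left_mono nn_Lp_norm_lq_sum_le) auto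
  finally show ?thesis .
qed

lemma sets_borel_pair [measurable_cong]:
  "sets (borel :: ('a::second_countable_topology \<times> 'b::second_countable_topology) measure)
    = sets (borel \<Otimes>\<^sub>M borel)"
  by (simp only: borel_prod)

lemma sets_borel_Times [measurable]:
  fixes A :: "'a::second_countable_topology set" and B :: "'b::second_countable_topology set"
  assumes "A \<in> sets borel" "B \<in> sets borel"
  shows "A \<times> B \<in> sets borel"
  using pair_measureI[OF assms] unfolding borel_prod .

lemma nn_integral_lborel_pair:
  fixes F :: "'a::euclidean_space \<times> 'b::euclidean_space \<Rightarrow> ennreal"
  assumes "F \<in> borel_measurable borel"
  shows "(\<integral>\<^sup>+z. F z \<partial>lborel) = (\<integral>\<^sup>+x. \<integral>\<^sup>+y. F (x, y) \<partial>lborel \<partial>lborel)"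
  using lborel.nn_integral_fst[of F lborel] assms by (simp add: lborel_prod)

lemma nn_integral_lborel_interleave:
  fixes F :: "real \<times> real \<times> 'a::euclidean_space \<times> 'b::euclidean_space \<Rightarrow> ennreal"
  assumes [measurable]: "F \<in> borel_measurable borel"
  shows "(\<integral>\<^sup>+x. F x \<partial>lborel) = (\<integral>\<^sup>+(x2, x4). \<integral>\<^sup>+(x1, x3). F (x1, x2, x3, x4) \<partial>lborel \<partial>lborel)"
proof -
  have "(\<integral>\<^sup>+x. F x \<partial>lborel)
      = (\<integral>\<^sup>+x1. \<integral>\<^sup>+x2. \<integral>\<^sup>+x3. \<integral>\<^sup>+x4. F (x1, x2, x3, x4) \<partial>lborel \<partial>lborel \<partial>lborel \<partial>lborel)"
    by (subst nn_integral_lborel_pair, measurable,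
        intro nn_integral_cong nn_integral_lborel_pair, measurable)+
  also have "\<dots> = (\<integral>\<^sup>+x2. \<integral>\<^sup>+x1. \<integral>\<^sup>+x3. \<integral>\<^sup>+x4. F (x1, x2, x3, x4) \<partial>lborel \<partial>lborel \<partial>lborel \<partial>lborel)"
    by (rule lborel_pair.Fubini'[symmetric]) measurable
  also have "\<dots> = (\<integral>\<^sup>+x2. \<integral>\<^sup>+x4. \<integral>\<^sup>+x1. \<integral>\<^sup>+x3. F (x1, x2, x3, x4) \<partial>lborel \<partial>lborel \<partial>lborel \<partial>lborel)"
    by (intro nn_integral_cong trans[OF _ lborel_pair.Fubini'] lborel_pair.Fubini'[symmetric])
      measurable
  also have "\<dots> = (\<integral>\<^sup>+(x2, x4). \<integral>\<^sup>+(x1, x3). F (x1, x2, x3, x4) \<partial>lborel \<partial>lborel)"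
    by (simp add: nn_integral_lborel_pair)
  finally show ?thesis .
qed

lemma Lpnorm_zero [simp]: "Lpnorm p B (\<lambda>x. 0) = 0"
  by (simp add: Lpnorm_def)

lemma epowr_Lpnorm:
  assumes "p \<noteq> 0"
  shows "epowr (Lpnorm p B F) p = (\<integral>\<^sup>+x. indicator B x * ennreal (cmod (F x) powr p) \<partial>lborel)"
  using assms by (simp add: Lpnorm_def epowr_epowr)

lemma Lpnorm_boxprod:
  fixes F :: "real \<times> real \<times> (real ^ 'd1) \<times> (real ^ 'd2) \<Rightarrow> complex"
  assumes "0 < p" and [measurable]: "B \<in> sets borel" "B' \<in> sets borel" "F \<in> borel_measurable borel"
  shows "Lpnorm p (boxprod B B') F = nn_Lp_norm p (restrict_space lborel B')
    (\<lambda>(x2, x4). Lpnorm p B (\<lambda>(x1, x3). F (x1, x2, x3, x4)))"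
proof -
  define g where "g x = ennreal (cmod (F x) powr p)" for x
  have [measurable]: "g \<in> borel_measurable borel"
    unfolding g_def by measurable
  have "(\<integral>\<^sup>+x. indicator (boxprod B B') x * g x \<partial>lborel)
      = (\<integral>\<^sup>+(x1, x2, x3, x4).
          indicator B' (x2, x4) * (indicator B (x1, x3) * g (x1, x2, x3, x4)) \<partial>lborel)"
    by (intro nn_integral_cong) (auto simp: boxprod_def indicator_def split: prod.split)
  also have "\<dots> = (\<integral>\<^sup>+(x2, x4). \<integral>\<^sup>+(x1, x3).
      indicator B' (x2, x4) * (indicator B (x1, x3) * g (x1, x2, x3, x4)) \<partial>lborel \<partial>lborel)"
  proof -
    have "(\<lambda>(x1, x2, x3, x4). indicator B' (x2, x4) * (indicator B (x1, x3) * g (x1, x2, x3, x4)))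
      \<in> borel_measurable borel"
      by measurable
    then show ?thesis by (simp add: nn_integral_lborel_interleave)
  qed
  also have "\<dots> = (\<integral>\<^sup>+(x2, x4). indicator B' (x2, x4) *
      (\<integral>\<^sup>+(x1, x3). indicator B (x1, x3) * g (x1, x2, x3, x4) \<partial>lborel) \<partial>lborel)"
  proof (intro nn_integral_cong, clarify)
    fix x2 x4
    have "(\<lambda>(x1, x3). indicator B (x1, x3) * g (x1, x2, x3, x4)) \<in> borel_measurable lborel"
      by measurable
    from nn_integral_cmult[OF this, of "indicator B' (x2, x4)"]
    show "(\<integral>\<^sup>+(x1, x3). indicator B' (x2, x4) * (indicator B (x1, x3) * g (x1, x2, x3, x4)) \<partial>lborel)
      = indicator B' (x2, x4) * (\<integral>\<^sup>+(x1, x3). indicator B (x1, x3) * g (x1, x2, x3, x4) \<partial>lborel)"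
      by (simp add: split_def)
  qed
  also have "\<dots> = (\<integral>\<^sup>+y. epowr ((\<lambda>(x2, x4). Lpnorm p B (\<lambda>(x1, x3). F (x1, x2, x3, x4))) y) p
      \<partial>restrict_space lborel B')"
    using \<open>0 < p\<close>
    by (simp add: nn_integral_restrict_space epowr_Lpnorm g_def split_def mult.commute)
  finally show ?thesis
    unfolding nn_Lp_norm_def Lpnorm_def[of p "boxprod B B'"] g_def by (rule arg_cong)
qed

lemma borel_measurable_ee [measurable]: "ee \<in> borel_measurable borel"
  unfolding ee_def by (intro borel_measurable_continuous_onI continuous_intros)

lemma norm_ee [simp]: "norm (ee z) = 1"
  by (simp add: ee_def norm_exp_eq_Re)

lemma ee_add: "ee (a + b) = ee a * ee b"
  by (simp add: ee_def distrib_left exp_add)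

lemma borel_measurable_E2:
  assumes [measurable]: "Q1 \<in> borel_measurable borel" "Q2 \<in> borel_measurable borel"
    "h \<in> borel_measurable borel" "U \<in> sets borel"
  shows "E2 Q1 Q2 U h \<in> borel_measurable borel"
  unfolding E2_def set_lebesgue_integral_def by measurable

definition E2_inner :: "(real \<times> real \<Rightarrow> real ^ 'd2) \<Rightarrow> (real \<times> real \<Rightarrow> complex)
    \<Rightarrow> real \<times> (real ^ 'd2) \<Rightarrow> real \<Rightarrow> complex" where
  "E2_inner Q2 h = (\<lambda>(x2, x4) r. set_lebesgue_integral lborel {0..1}
      (\<lambda>s. h (r, s) * ee (x2 * s + x4 \<bullet> Q2 (r, s))))"

lemma borel_measurable_E2_inner:
  assumes [measurable]: "Q2 \<in> borel_measurable borel" "h \<in> borel_measurable borel"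
  shows "E2_inner Q2 h y \<in> borel_measurable borel"
  unfolding E2_inner_def set_lebesgue_integral_def by (cases y) (simp, measurable)

lemma E2_eq_0_if_not_set_integrable:
  assumes [measurable]: "Q1 \<in> borel_measurable borel" "Q2 \<in> borel_measurable borel"
    "h \<in> borel_measurable borel" "U \<in> sets borel"
    and "\<not> set_integrable lborel U h"
  shows "E2 Q1 Q2 U h x = 0"
proof -
  obtain x1 x2 x3 x4 where x: "x = (x1, x2, x3, x4)"
    by (cases x) auto
  define g where "g = (\<lambda>(r, s). h (r, s) * ee (x1 * r + x2 * s + x3 \<bullet> Q1 r + x4 \<bullet> Q2 (r, s)))"
  have [measurable]: "g \<in> borel_measurable borel"
    unfolding g_def by measurable
  have "set_integrable lborel U g \<longleftrightarrow> integrable lborel (\<lambda>w. norm (indicator U w *\<^sub>R g w))"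
    unfolding set_integrable_def by (rule integrable_norm_iff[symmetric]) measurable
  also have "\<dots> \<longleftrightarrow> integrable lborel (\<lambda>w. norm (indicator U w *\<^sub>R h w))"
    by (simp add: g_def norm_mult case_prod_beta)
  also have "\<dots> \<longleftrightarrow> set_integrable lborel U h"
    unfolding set_integrable_def by (rule integrable_norm_iff) measurable
  finally have "\<not> set_integrable lborel U g"
    using assms(5) by simp
  then show ?thesis
    by (simp add: x E2_def g_def set_lebesgue_integral_def set_integrable_def
        not_integrable_integral_eq)
qed

lemma E2_eq_E3_inner:
  assumes [measurable]: "Q1 \<in> borel_measurable borel" "Q2 \<in> borel_measurable borel"
    "h \<in> borel_measurable borel" "J \<in> sets borel"
    and "J \<subseteq> {0..1}" and h_int: "set_integrable lborel ({0..1} \<times> {0..1}) h"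
  shows "E2 Q1 Q2 (J \<times> {0..1}) h (x1, x2, x3, x4) = E3 Q1 J (E2_inner Q2 h (x2, x4)) (x1, x3)"
proof -
  define f where "f = (\<lambda>w. indicator (J \<times> {0..1}) w *\<^sub>R
      (\<lambda>(r, s). h (r, s) * ee (x1 * r + x2 * s + x3 \<bullet> Q1 r + x4 \<bullet> Q2 (r, s))) w)"
  have "integrable lborel f"
  proof (rule Bochner_Integration.integrable_bound)
    show "integrable lborel (\<lambda>w. indicator ({0..1} \<times> {0..1}) w *\<^sub>R h w)"
      using h_int by (simp add: set_integrable_def)
    show "AE w in lborel. norm (f w) \<le> norm (indicator ({0..1} \<times> {0..1}) w *\<^sub>R h w)"
      using \<open>J \<subseteq> {0..1}\<close> by (intro AE_I2) (auto simp: f_def norm_mult indicator_def)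
  qed (unfold f_def, measurable)
  then have f_int: "integrable (lborel \<Otimes>\<^sub>M lborel) f"
    by (simp add: lborel_prod)
  have "E2 Q1 Q2 (J \<times> {0..1}) h (x1, x2, x3, x4) = (\<integral>w. f w \<partial>(lborel \<Otimes>\<^sub>M lborel))"
    by (simp add: E2_def set_lebesgue_integral_def f_def lborel_prod)
  also have "\<dots> = (\<integral>r. \<integral>s. f (r, s) \<partial>lborel \<partial>lborel)"
    by (rule lborel_pair.integral_fst'[OF f_int, symmetric])
  also have "\<dots> = (\<integral>r. indicator J r *\<^sub>R
      (E2_inner Q2 h (x2, x4) r * ee (x1 * r + x3 \<bullet> Q1 r)) \<partial>lborel)"
  proof (intro Bochner_Integration.integral_cong refl)
    fix r
    have "f (r, s) = (indicator J r * ee (x1 * r + x3 \<bullet> Q1 r)) *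
        (indicator {0..1} s *\<^sub>R (h (r, s) * ee (x2 * s + x4 \<bullet> Q2 (r, s))))" for s
      by (simp add: f_def ee_add[symmetric] add_ac indicator_times scaleR_conv_of_real
          split: split_indicator)
    then show "(\<integral>s. f (r, s) \<partial>lborel)
        = indicator J r *\<^sub>R (E2_inner Q2 h (x2, x4) r * ee (x1 * r + x3 \<bullet> Q1 r))"
      by (simp add: E2_inner_def set_lebesgue_integral_def scaleR_conv_of_real
          split: split_indicator)
  qed
  also have "\<dots> = E3 Q1 J (E2_inner Q2 h (x2, x4)) (x1, x3)"
    by (simp add: E3_def set_lebesgue_integral_def)
  finally show ?thesis .
qed

lemma E3_E2_inner_eq_section:
  assumes "Q1 \<in> borel_measurable borel" "Q2 \<in> borel_measurable borel"
    "h \<in> borel_measurable borel" "J \<in> sets borel"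
    and "J \<subseteq> {0..1}" and "set_integrable lborel ({0..1} \<times> {0..1}) h"
  shows "E3 Q1 J (E2_inner Q2 h y) = (\<lambda>(x1, x3). E2 Q1 Q2 (J \<times> {0..1}) h (x1, fst y, x3, snd y))"
  using E2_eq_E3_inner[OF assms] by (cases y) auto

lemma Lpnorm_E2_boxprod:
  assumes [measurable]: "Q1 \<in> borel_measurable borel" "Q2 \<in> borel_measurable borel"
    "h \<in> borel_measurable borel" "J \<in> sets borel" "B \<in> sets borel" "B' \<in> sets borel"
    and "J \<subseteq> {0..1}" "set_integrable lborel ({0..1} \<times> {0..1}) h" "0 < p"
  shows "Lpnorm p (boxprod B B') (E2 Q1 Q2 (J \<times> {0..1}) h)
    = nn_Lp_norm p (restrict_space lborel B') (\<lambda>y. Lpnorm p B (E3 Q1 J (E2_inner Q2 h y)))"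
proof -
  have "E2 Q1 Q2 (J \<times> {0..1}) h \<in> borel_measurable borel"
    by (intro borel_measurable_E2) measurable
  then show ?thesis
    using assms by (simp add: Lpnorm_boxprod E3_E2_inner_eq_section split_def)
qed

lemma borel_measurable_Lpnorm_E3_E2_inner:
  assumes [measurable]: "Q1 \<in> borel_measurable borel" "Q2 \<in> borel_measurable borel"
    "h \<in> borel_measurable borel" "J \<in> sets borel" "B \<in> sets borel"
    and "J \<subseteq> {0..1}" "set_integrable lborel ({0..1} \<times> {0..1}) h"
  shows "(\<lambda>y. Lpnorm p B (E3 Q1 J (E2_inner Q2 h y))) \<in> borel_measurable borel"
proof -
  have [measurable]: "E2 Q1 Q2 (J \<times> {0..1}) h \<in> borel_measurable borel"
    by (intro borel_measurable_E2) measurable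
  have "(\<lambda>(x2, x4). Lpnorm p B (\<lambda>(x1, x3). E2 Q1 Q2 (J \<times> {0..1}) h (x1, x2, x3, x4)))
      \<in> borel_measurable borel"
    unfolding Lpnorm_def by measurable
  then show ?thesis
    using assms by (simp add: E3_E2_inner_eq_section split_def)
qed

theorem corollary3p3:
  fixes p q C :: real and l :: nat
    and Q1 :: "real \<Rightarrow> real ^ 'd1" and Q2 :: "real \<times> real \<Rightarrow> real ^ 'd2"
    and I :: "nat \<Rightarrow> real set" and B :: "(real \<times> (real ^ 'd1)) set"
  assumes pq: "p \<ge> q" "q \<ge> 1"
    and Q1_meas: "Q1 \<in> borel_measurable borel"
    and Q2_meas: "Q2 \<in> borel_measurable borel"
    and I_meas: "\<And>i. i \<in> {1..l} \<Longrightarrow> I i \<in> sets borel"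
    and I_disj: "\<And>i j. i \<in> {1..l} \<Longrightarrow> j \<in> {1..l} \<Longrightarrow> i \<noteq> j \<Longrightarrow> I i \<inter> I j = {}"
    and I_cover: "(\<Union>i\<in>{1..l}. I i) = {0..1}"
    and B_meas: "B \<in> sets borel"
    and hyp: "\<And>h :: real \<Rightarrow> complex. h \<in> borel_measurable borel \<Longrightarrow>
        Lpnorm p B (E3 Q1 {0..1} h)
          \<le> ennreal C * epowr (\<Sum>i\<in>{1..l}. epowr (Lpnorm p B (E3 Q1 (I i) h)) q) (1 / q)"
  shows "\<And>(B' :: (real \<times> (real ^ 'd2)) set) (h :: real \<times> real \<Rightarrow> complex).
      B' \<in> sets borel \<Longrightarrow> h \<in> borel_measurable borel \<Longrightarrow>
      Lpnorm p (boxprod B B') (E2 Q1 Q2 ({0..1} \<times> {0..1}) h)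
        \<le> ennreal C * epowr (\<Sum>i\<in>{1..l}.
              epowr (Lpnorm p (boxprod B B') (E2 Q1 Q2 (I i \<times> {0..1}) h)) q) (1 / q)"
proof goal_cases
  case (1 B' h)
  note [measurable] = Q1_meas Q2_meas B_meas \<open>B' \<in> sets borel\<close> \<open>h \<in> borel_measurable borel\<close>
  show ?case
  proof (cases "set_integrable lborel ({0..1} \<times> {0..1}) h")
    case False
    then have "E2 Q1 Q2 ({0..1} \<times> {0..1}) h = (\<lambda>x. 0)"
      by (intro ext E2_eq_0_if_not_set_integrable) measurable
    then show ?thesis by simp
  next
    case True
    define N where "N J y = Lpnorm p B (E3 Q1 J (E2_inner Q2 h y))" for J y
    have I: "I i \<in> sets borel" "I i \<subseteq> {0..1}" if "i \<in> {1..l}" for i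
      using I_meas I_cover that by auto
    have N_meas: "N (I i) \<in> borel_measurable borel" if "i \<in> {1..l}" for i
      using I[OF that] True 1 Q1_meas Q2_meas B_meas unfolding N_def
      by (intro borel_measurable_Lpnorm_E3_E2_inner) auto
    have "N {0..1} y \<le> ennreal C * epowr (\<Sum>i\<in>{1..l}. epowr (N (I i) y) q) (1 / q)" for y
      unfolding N_def by (intro hyp borel_measurable_E2_inner) measurable
    then have "nn_Lp_norm p (restrict_space lborel B') (N {0..1})
        \<le> ennreal C * epowr (\<Sum>i\<in>{1..l}.
              epowr (nn_Lp_norm p (restrict_space lborel B') (N (I i))) q) (1 / q)"
      using pq N_meas by (intro nn_Lp_norm_le_lq_sum measurable_restrict_space1) auto
    moreover have "Lpnorm p (boxprod B B') (E2 Q1 Q2 (J \<times> {0..1}) h)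
        = nn_Lp_norm p (restrict_space lborel B') (N J)" if "J \<in> sets borel" "J \<subseteq> {0..1}" for J
      using that pq True 1 Q1_meas Q2_meas B_meas unfolding N_def
      by (intro Lpnorm_E2_boxprod) auto
    ultimately show ?thesis
      using I by simp
  qed
qed

end
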